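(* Let $\mathcal{C}$ be a permutation class (resp. a polyomino class) and let $\mathcal{M}$ be its canonical $m$-basis. Then $\mathcal{C}=Av_{\mathfrak{S}}(\mathcal{M})$ (resp. $\mathcal{C}=Av_{\mathfrak{P}}(\mathcal{M})$).
   Context: Binary matrices are matrices with entries in $\{0,1\}$; $M'\preccurlyeq M$ (submatrix order) means $M'$ is obtained from $M$ by deleting some rows and/or columns. A permutation $\sigma$ of $\{1,\dots,n\}$ is identified with its permutation matrix $M_\sigma$, where $M_\sigma(i,j)=1$ iff $i=\sigma(j)$ (rows numbered bottom to top); a permutation class is a set of permutations closed under taking patterns (equivalently, closed under taking submatrices that are permutation matrices). A quasi-permutation matrix is a binary matrix with at most one $1$ in each row and each column. A polyomino is a finite edge-connected union of unit cells of $\mathbb{Z}^2$ up to translation, identified with the binary matrix of its minimal bounding rectangle (entry $(i,j)$ equal to $1$ iff the unit square $[j-1,j]\times[i-1,i]$ is a cell, the polyomino placed in the positive quarter plane touching both axes); a polyomino class is a set of polyominoes closed under taking submatrices that are polyominoes. For a set $\mathcal{M}$ of matrices, $Av_{\mathfrak{S}}(\mathcal{M})$ (resp. $Av_{\mathfrak{P}}(\mathcal{M})$) is the set of permutations (resp. polyominoes) with no submatrix in $\mathcal{M}$. For a class $\mathcal{C}$, let $\mathcal{C}^+$ be the set of binary matrices that are submatrices of some element of $\mathcal{C}$. The canonical $m$-basis of a permutation class (resp. polyomino class) $\mathcal{C}$ is the set of quasi-permutation matrices (resp. binary matrices) not in $\mathcal{C}^+$ that are minimal for $\preccurlyeq$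 among quasi-permutation matrices (resp. binary matrices) not in $\mathcal{C}^+$. *)

theory Defs
  imports "HOL-Combinatorics.Permutations"
begin

text \<open>A binary matrix is a triple (number of rows m, number of columns n, entries),
rows and columns indexed from 0; an entry is True iff it is 1.
Well-formed matrices have all 1-entries inside the m x n rectangle, so that
equality of triples is equality of matrices.\<close>

type_synonym bmat = "nat \<times> nat \<times> (nat \<Rightarrow> nat \<Rightarrow> bool)"

definition rows :: "bmat \<Rightarrow> nat" where "rows M = fst M"
definition cols :: "bmat \<Rightarrow> nat" where "cols M = fst (snd M)"
definition ent :: "bmat \<Rightarrow> nat \<Rightarrow> nat \<Rightarrow> bool" where "ent M = snd (snd M)"

definition wf_mat :: "bmat \<Rightarrow> bool" where
  "wf_mat M \<longleftrightarrow> (\<forall>i j. ent M i j \<longrightarrow> i < rows M \<and> j < cols M)"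

definition submat :: "bmat \<Rightarrow> bmat \<Rightarrow> bool" (infix "\<preceq>\<^sub>m" 50) where
  "M' \<preceq>\<^sub>m M \<longleftrightarrow> wf_mat M' \<and> wf_mat M \<and>
     (\<exists>r c. strict_mono_on {..<rows M'} r \<and> (\<forall>i<rows M'. r i < rows M) \<and>
            strict_mono_on {..<cols M'} c \<and> (\<forall>j<cols M'. c j < cols M) \<and>
            (\<forall>i<rows M'. \<forall>j<cols M'. ent M' i j = ent M (r i) (c j)))"

definition perm_mat :: "nat \<Rightarrow> (nat \<Rightarrow> nat) \<Rightarrow> bmat" where
  "perm_mat n \<sigma> = (n, n, \<lambda>i j. i < n \<and> j < n \<and> i = \<sigma> j)"

definition is_perm_mat :: "bmat \<Rightarrow> bool" where
  "is_perm_mat M \<longleftrightarrow> (\<exists>n \<sigma>. \<sigma> permutes {..<n} \<and> M = perm_mat n \<sigma>)"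

definition quasi_perm_mat :: "bmat \<Rightarrow> bool" where
  "quasi_perm_mat M \<longleftrightarrow> wf_mat M \<and>
     (\<forall>i j j'. ent M i j \<and> ent M i j' \<longrightarrow> j = j') \<and>
     (\<forall>i i' j. ent M i j \<and> ent M i' j \<longrightarrow> i = i')"

text \<open>Polyominoes: nonempty, edge-connected set of cells filling its minimal bounding
rectangle (every row and every column contains a cell).\<close>
definition cells :: "bmat \<Rightarrow> (nat \<times> nat) set" where
  "cells M = {(i, j). ent M i j}"

definition cell_adj :: "(nat \<times> nat) set \<Rightarrow> ((nat \<times> nat) \<times> (nat \<times> nat)) set" where
  "cell_adj S = {((i, j), (i', j')). (i, j) \<in> S \<and> (i', j') \<in> S \<and>
       ((i = i' \<and> (j' = j + 1 \<or> j = j' + 1)) \<or> (j = j' \<and> (i' = i + 1 \<or> i = i' + 1)))}"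

definition is_polyomino :: "bmat \<Rightarrow> bool" where
  "is_polyomino M \<longleftrightarrow> wf_mat M \<and> cells M \<noteq> {} \<and>
     (\<forall>a\<in>cells M. \<forall>b\<in>cells M. (a, b) \<in> (cell_adj (cells M))\<^sup>*) \<and>
     (\<forall>i<rows M. \<exists>j. ent M i j) \<and> (\<forall>j<cols M. \<exists>i. ent M i j)"

definition perm_class :: "bmat set \<Rightarrow> bool" where
  "perm_class C \<longleftrightarrow> (\<forall>M\<in>C. is_perm_mat M) \<and>
     (\<forall>M\<in>C. \<forall>M'. is_perm_mat M' \<and> M' \<preceq>\<^sub>m M \<longrightarrow> M' \<in> C)"

definition poly_class :: "bmat set \<Rightarrow> bool" where
  "poly_class C \<longleftrightarrow> (\<forall>M\<in>C. is_polyomino M) \<and>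
     (\<forall>M\<in>C. \<forall>M'. is_polyomino M' \<and> M' \<preceq>\<^sub>m M \<longrightarrow> M' \<in> C)"

definition closure_plus :: "bmat set \<Rightarrow> bmat set" where
  "closure_plus C = {M. wf_mat M \<and> (\<exists>P\<in>C. M \<preceq>\<^sub>m P)}"

definition perm_mbasis :: "bmat set \<Rightarrow> bmat set" where
  "perm_mbasis C = {M. quasi_perm_mat M \<and> M \<notin> closure_plus C \<and>
     (\<forall>M'. quasi_perm_mat M' \<and> M' \<notin> closure_plus C \<and> M' \<preceq>\<^sub>m M \<longrightarrow> M' = M)}"

definition poly_mbasis :: "bmat set \<Rightarrow> bmat set" where
  "poly_mbasis C = {M. wf_mat M \<and> M \<notin> closure_plus C \<and>
     (\<forall>M'. wf_mat M' \<and> M' \<notin> closure_plus C \<and> M' \<preceq>\<^sub>m M \<longrightarrow> M' = M)}"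

definition Av_S :: "bmat set \<Rightarrow> bmat set" where
  "Av_S \<M> = {P. is_perm_mat P \<and> \<not> (\<exists>M\<in>\<M>. M \<preceq>\<^sub>m P)}"

definition Av_P :: "bmat set \<Rightarrow> bmat set" where
  "Av_P \<M> = {P. is_polyomino P \<and> \<not> (\<exists>M\<in>\<M>. M \<preceq>\<^sub>m P)}"

end

theory Submission
  imports Defs
begin

text \<open>Let C be closed under submatrices of kind T (permutation matrices, polyominoes), and let
Q \<supseteq> T be the ambient kind of the basis (quasi-permutation matrices, binary matrices). A matrix P
of kind T outside C lies outside C+, and among its Q-submatrices outside C+ there is a
\<preceq>-minimal one, since proper submatrices have fewer rows or columns; that one is a basis element
contained in P. Conversely, a basis element below some P \<in> C would lie in C+.\<close>

lemma strict_mono_on_lessThan_add: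
  assumes "strict_mono_on {..<n} (r :: nat \<Rightarrow> nat)" "i + k < n"
  shows "r i + k \<le> r (i + k)"
  using assms(2)
proof (induction k)
  case (Suc k)
  have "r (i + k) < r (Suc (i + k))"
    using Suc.prems strict_mono_onD[OF assms(1)] by auto
  with Suc show ?case by simp
qed simp

lemma strict_mono_on_lessThan_ge:
  "strict_mono_on {..<n} (r :: nat \<Rightarrow> nat) \<Longrightarrow> i < n \<Longrightarrow> i \<le> r i"
  using strict_mono_on_lessThan_add[of n r 0 i] by simp

lemma strict_mono_on_lessThan_le:
  assumes "strict_mono_on {..<k} (r :: nat \<Rightarrow> nat)" "\<forall>i<k. r i < n"
  shows "k \<le> n"
proof (cases k)
  case (Suc m)
  then show ?thesis
    using strict_mono_on_lessThan_ge[OF assms(1), of m] assms(2)[rule_format, of m] by simp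
qed simp

lemma strict_mono_on_lessThan_self_eq_id:
  assumes "strict_mono_on {..<n} (r :: nat \<Rightarrow> nat)" "\<forall>i<n. r i < n" "i < n"
  shows "r i = i"
proof -
  have "r i + (n - 1 - i) \<le> r (n - 1)"
    using strict_mono_on_lessThan_add[OF assms(1), of i "n - 1 - i"] assms(3) by simp
  moreover have "r (n - 1) < n"
    using assms(2,3) by simp
  ultimately show ?thesis
    using strict_mono_on_lessThan_ge[OF assms(1,3)] assms(3) by simp
qed

lemma submat_dims_le: "M' \<preceq>\<^sub>m M \<Longrightarrow> rows M' \<le> rows M \<and> cols M' \<le> cols M"
  unfolding submat_def using strict_mono_on_lessThan_le by blast

lemma wf_mat_eqI:
  assumes "wf_mat A" "wf_mat B" "rows A = rows B" "cols A = cols B"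
    and "\<forall>i<rows A. \<forall>j<cols A. ent A i j = ent B i j"
  shows "A = B"
proof -
  have "ent A i j = ent B i j" for i j
  proof (cases "i < rows A \<and> j < cols A")
    case False
    then show ?thesis
      using assms(1-4) unfolding wf_mat_def by metis
  qed (use assms(5) in blast)
  then have "ent A = ent B" by blast
  with assms(3,4) show ?thesis
    unfolding rows_def cols_def ent_def by (simp add: prod_eq_iff)
qed

lemma submat_eq_if_dims_le:
  assumes "M' \<preceq>\<^sub>m M" "rows M \<le> rows M'" "cols M \<le> cols M'"
  shows "M' = M"
proof -
  from assms(1) obtain r c where
    wf: "wf_mat M'" "wf_mat M" and
    r: "strict_mono_on {..<rows M'} r" "\<forall>i<rows M'. r i < rows M" and
    c: "strict_mono_on {..<cols M'} c" "\<forall>j<cols M'. c j < cols M" and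
    ent: "\<forall>i<rows M'. \<forall>j<cols M'. ent M' i j = ent M (r i) (c j)"
    unfolding submat_def by blast
  have dims: "rows M' = rows M" "cols M' = cols M"
    using submat_dims_le[OF assms(1)] assms(2,3) by auto
  have "\<forall>i<rows M'. r i = i"
    using strict_mono_on_lessThan_self_eq_id[OF r(1)] r(2) dims by auto
  moreover have "\<forall>j<cols M'. c j = j"
    using strict_mono_on_lessThan_self_eq_id[OF c(1)] c(2) dims by auto
  ultimately show ?thesis
    using wf_mat_eqI[OF wf dims] ent by simp
qed

lemma submat_refl: "wf_mat M \<Longrightarrow> M \<preceq>\<^sub>m M"
  unfolding submat_def by (auto intro!: exI[of _ id] simp: strict_mono_on_def)

lemma submat_trans:
  assumes "A \<preceq>\<^sub>m B" "B \<preceq>\<^sub>m C"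
  shows "A \<preceq>\<^sub>m C"
proof -
  from assms(1) obtain r c where
    "wf_mat A" and
    r: "strict_mono_on {..<rows A} r" "\<forall>i<rows A. r i < rows B" and
    c: "strict_mono_on {..<cols A} c" "\<forall>j<cols A. c j < cols B" and
    ent: "\<forall>i<rows A. \<forall>j<cols A. ent A i j = ent B (r i) (c j)"
    unfolding submat_def by blast
  from assms(2) obtain r' c' where
    "wf_mat C" and
    r': "strict_mono_on {..<rows B} r'" "\<forall>i<rows B. r' i < rows C" and
    c': "strict_mono_on {..<cols B} c'" "\<forall>j<cols B. c' j < cols C" and
    ent': "\<forall>i<rows B. \<forall>j<cols B. ent B i j = ent C (r' i) (c' j)"
    unfolding submat_def by blast
  have "strict_mono_on {..<rows A} (r' \<circ> r)" "strict_mono_on {..<cols A} (c' \<circ> c)"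
    using r c r'(1) c'(1) unfolding strict_mono_on_def by auto
  with \<open>wf_mat A\<close> \<open>wf_mat C\<close> r(2) c(2) r'(2) c'(2) ent ent' show ?thesis
    unfolding submat_def by (intro conjI exI[of _ "r' \<circ> r"] exI[of _ "c' \<circ> c"]) auto
qed

lemma ex_minimal_submat:
  assumes "Q P" "wf_mat P"
  shows "\<exists>M. Q M \<and> M \<preceq>\<^sub>m P \<and> (\<forall>M'. Q M' \<and> M' \<preceq>\<^sub>m M \<longrightarrow> M' = M)"
proof -
  let ?size = "\<lambda>M. rows M + cols M"
  obtain M where M: "Q M" "M \<preceq>\<^sub>m P"
    and least: "\<And>N. Q N \<Longrightarrow> N \<preceq>\<^sub>m P \<Longrightarrow> ?size M \<le> ?size N"
    using ex_has_least_nat[of "\<lambda>M. Q M \<and> M \<preceq>\<^sub>m P" P ?size] assms submat_refl by blast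
  have "M' = M" if "Q M'" "M' \<preceq>\<^sub>m M" for M'
    using least[OF that(1) submat_trans[OF that(2) M(2)]] submat_dims_le[OF that(2)]
      submat_eq_if_dims_le[OF that(2)] by simp
  with M show ?thesis by blast
qed

definition minimal_excluded :: "(bmat \<Rightarrow> bool) \<Rightarrow> bmat set \<Rightarrow> bmat set" where
  "minimal_excluded Q C = {M. Q M \<and> M \<notin> closure_plus C \<and>
     (\<forall>M'. Q M' \<and> M' \<notin> closure_plus C \<and> M' \<preceq>\<^sub>m M \<longrightarrow> M' = M)}"

definition avoiders :: "(bmat \<Rightarrow> bool) \<Rightarrow> bmat set \<Rightarrow> bmat set" where
  "avoiders T B = {P. T P \<and> \<not> (\<exists>M\<in>B. M \<preceq>\<^sub>m P)}"

lemma closure_plusI: "M \<preceq>\<^sub>m P \<Longrightarrow> P \<in> C \<Longrightarrow> M \<in> closure_plus C"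
  unfolding closure_plus_def submat_def by blast

theorem class_eq_avoiders_minimal_excluded:
  assumes kind: "\<forall>M\<in>C. T M"
    and closed: "\<forall>M\<in>C. \<forall>M'. T M' \<and> M' \<preceq>\<^sub>m M \<longrightarrow> M' \<in> C"
    and kind_le: "\<And>P. T P \<Longrightarrow> Q P \<and> wf_mat P"
  shows "C = avoiders T (minimal_excluded Q C)"
proof
  show "C \<subseteq> avoiders T (minimal_excluded Q C)"
    using kind closure_plusI unfolding avoiders_def minimal_excluded_def by blast
next
  show "avoiders T (minimal_excluded Q C) \<subseteq> C"
  proof
    fix P assume P: "P \<in> avoiders T (minimal_excluded Q C)"
    then have "T P" unfolding avoiders_def by blast
    show "P \<in> C"
    proof (rule ccontr)
      assume "P \<notin> C"
      with closed \<open>T P\<close> have "P \<notin> closure_plus C"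
        unfolding closure_plus_def by blast
      then obtain M where "M \<in> minimal_excluded Q C" "M \<preceq>\<^sub>m P"
        using ex_minimal_submat[of "\<lambda>M. Q M \<and> M \<notin> closure_plus C" P] kind_le[OF \<open>T P\<close>]
        unfolding minimal_excluded_def by auto
      with P show False unfolding avoiders_def by blast
    qed
  qed
qed

lemma is_perm_mat_quasi_perm_mat: "is_perm_mat M \<Longrightarrow> quasi_perm_mat M"
proof -
  assume "is_perm_mat M"
  then obtain n \<sigma> where "\<sigma> permutes {..<n}" "M = perm_mat n \<sigma>"
    unfolding is_perm_mat_def by blast
  moreover from this(1) have "inj \<sigma>" by (rule permutes_inj)
  ultimately show ?thesis
    unfolding quasi_perm_mat_def wf_mat_def perm_mat_def rows_def cols_def ent_def
    by (auto dest: injD)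
qed

lemma quasi_perm_mat_wf: "quasi_perm_mat M \<Longrightarrow> wf_mat M"
  unfolding quasi_perm_mat_def by blast

theorem proposition4:
  fixes C D :: "bmat set"
  shows "(perm_class C \<longrightarrow> C = Av_S (perm_mbasis C)) \<and>
         (poly_class D \<longrightarrow> D = Av_P (poly_mbasis D))"
proof (intro conjI impI)
  assume "perm_class C"
  then have "C = avoiders is_perm_mat (minimal_excluded quasi_perm_mat C)"
    using class_eq_avoiders_minimal_excluded[of C is_perm_mat quasi_perm_mat]
      is_perm_mat_quasi_perm_mat quasi_perm_mat_wf
    unfolding perm_class_def by blast
  then show "C = Av_S (perm_mbasis C)"
    unfolding Av_S_def perm_mbasis_def avoiders_def minimal_excluded_def .
next
  assume "poly_class D"
  then have "D = avoiders is_polyomino (minimal_excluded wf_mat D)"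
    using class_eq_avoiders_minimal_excluded[of D is_polyomino wf_mat]
    unfolding poly_class_def is_polyomino_def by blast
  then show "D = Av_P (poly_mbasis D)"
    unfolding Av_P_def poly_mbasis_def avoiders_def minimal_excluded_def .
qed

end
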